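(* Let $n\ge 4$ and let $\mathcal M$ be an IP-SEG representation of the chordless cycle $C_n$ containing at least one interval segment. Then either $\mathcal M$ has exactly one interval arc, or $\mathcal M$ has exactly two interval arcs and these lie on different lines (one on $L_1$ and one on $L_2$).
   Context: Let $L_1$ and $L_2$ be two distinct parallel horizontal lines in the plane. A closed straight line segment is an interval segment if both of its endpoints lie on the same line $L_i$, and a permutation segment if one endpoint lies on $L_1$ and the other on $L_2$. An IP-SEG model is a finite family of interval and permutation segments; its intersection graph has one vertex per segment, adjacent iff the segments intersect. For $m\ge 3$, $C_m$ is the chordless cycle on $v_1,\dots,v_m$ with $v_i$ adjacent to $v_{i+1}$ (indices mod $m$) and no other edges. An IP-SEG representation of $C_m$ is an IP-SEG model with segments $s(v_1),\dots,s(v_m)$ whose intersection graph is $C_m$ with $s(v_i)$ corresponding to $v_i$. If such a representation contains both interval and permutation segments, an interval arc is a maximal sequence of cyclically consecutive segments $s(v_i),\dots,s(v_j)$ that are all interval segments (all segments of an interval arc lie on the same line). *)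

theory Defs
  imports "HOL-Analysis.Analysis"
begin

type_synonym point = "real \<times> real"
type_synonym seg = "point \<times> point"

text \<open>The lines are L1 = {y = a} and L2 = {y = b} with a \<noteq> b.\<close>

definition on_line :: "real \<Rightarrow> point \<Rightarrow> bool" where
  "on_line c p \<longleftrightarrow> snd p = c"

definition seg_set :: "seg \<Rightarrow> point set" where
  "seg_set s = closed_segment (fst s) (snd s)"

definition interval_seg_on :: "real \<Rightarrow> seg \<Rightarrow> bool" where
  "interval_seg_on c s \<longleftrightarrow> on_line c (fst s) \<and> on_line c (snd s)"

definition interval_seg :: "real \<Rightarrow> real \<Rightarrow> seg \<Rightarrow> bool" where
  "interval_seg a b s \<longleftrightarrow> interval_seg_on a s \<or> interval_seg_on b s"

definition perm_seg :: "real \<Rightarrow> real \<Rightarrow> seg \<Rightarrow> bool" where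
  "perm_seg a b s \<longleftrightarrow> (on_line a (fst s) \<and> on_line b (snd s)) \<or> (on_line b (fst s) \<and> on_line a (snd s))"

text \<open>An IP-SEG representation of C_n: segments s 0, ..., s (n-1) (vertex v_(i+1) is s i),
  each an interval or permutation segment, whose intersection graph is exactly the cycle.\<close>
definition IPSEG_rep_cycle :: "real \<Rightarrow> real \<Rightarrow> nat \<Rightarrow> (nat \<Rightarrow> seg) \<Rightarrow> bool" where
  "IPSEG_rep_cycle a b n s \<longleftrightarrow>
     (\<forall>i<n. interval_seg a b (s i) \<or> perm_seg a b (s i)) \<and>
     (\<forall>i<n. \<forall>j<n. i \<noteq> j \<longrightarrow>
        (seg_set (s i) \<inter> seg_set (s j) \<noteq> {} \<longleftrightarrow> (j = Suc i mod n \<or> i = Suc j mod n)))"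

definition cyc_block :: "nat \<Rightarrow> nat \<Rightarrow> nat \<Rightarrow> nat set" where
  "cyc_block n i k = {(i + t) mod n | t. t \<le> k}"

definition interval_run :: "real \<Rightarrow> real \<Rightarrow> nat \<Rightarrow> (nat \<Rightarrow> seg) \<Rightarrow> nat set \<Rightarrow> bool" where
  "interval_run a b n s A \<longleftrightarrow>
     (\<exists>i k. i < n \<and> k < n \<and> A = cyc_block n i k) \<and> (\<forall>j\<in>A. interval_seg a b (s j))"

definition interval_arc :: "real \<Rightarrow> real \<Rightarrow> nat \<Rightarrow> (nat \<Rightarrow> seg) \<Rightarrow> nat set \<Rightarrow> bool" where
  "interval_arc a b n s A \<longleftrightarrow>
     interval_run a b n s A \<and> (\<forall>B. interval_run a b n s B \<and> A \<subseteq> B \<longrightarrow> B = A)"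

end

theory Submission
  imports Defs
begin

text \<open>Consecutive segments of the cycle intersect, and interval segments on different lines never
  do, so every interval arc lies on one line; it therefore suffices to show that each line carries
  at most one interval arc. Suppose the arc \<open>T 0, \<dots>, T k\<close> lies on \<open>L\<^sub>1\<close> and a later \<open>T j\<close> lies
  on \<open>L\<^sub>1\<close> too. The neighbours \<open>p = T (k+1)\<close> and \<open>q = T (n-1)\<close> of the arc are permutation
  segments. If \<open>T j\<close> is adjacent to \<open>p\<close> (or \<open>q\<close>), it shares the \<open>L\<^sub>1\<close>-endpoint of \<open>p\<close> with
  \<open>T k\<close> (or \<open>T 0\<close>), a chord of the cycle. Otherwise \<open>p\<close> and \<open>q\<close> are disjoint, and the paths
  \<open>T j, \<dots>, T (n-1)\<close> and \<open>T (k+1), \<dots>, T j\<close> avoid \<open>p\<close> and \<open>q\<close> respectively. A connected set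
  avoiding a permutation segment stays on one side of it, so \<open>T j\<close> lies on \<open>L\<^sub>1\<close> strictly between
  the feet of \<open>p\<close> and \<open>q\<close>; but the arc joins these two feet along \<open>L\<^sub>1\<close>, so it meets \<open>T j\<close>,
  again a chord.\<close>

section \<open>Segments between two lines\<close>

definition x_range :: "seg \<Rightarrow> real set" where
  "x_range s = closed_segment (fst (fst s)) (fst (snd s))"

text \<open>For a segment without an endpoint on line \<open>c\<close>, \<open>end_x c\<close> returns the abscissa of its second
  endpoint; it is only used for permutation segments.\<close>
definition end_x :: "real \<Rightarrow> seg \<Rightarrow> real" where
  "end_x c s = (if snd (fst s) = c then fst (fst s) else fst (snd s))"

text \<open>\<open>cross_x a b p y\<close> is the abscissa of the permutation segment \<open>p\<close> at height \<open>y\<close>.\<close>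
definition cross_x :: "real \<Rightarrow> real \<Rightarrow> seg \<Rightarrow> real \<Rightarrow> real" where
  "cross_x a b p y = end_x a p + (y - a) / (b - a) * (end_x b p - end_x a p)"

definition left_of :: "real \<Rightarrow> real \<Rightarrow> seg \<Rightarrow> point \<Rightarrow> bool" where
  "left_of a b p z \<longleftrightarrow> fst z < cross_x a b p (snd z)"

lemma mem_seg_set_iff:
  "z \<in> seg_set s \<longleftrightarrow>
   (\<exists>t. 0 \<le> t \<and> t \<le> 1 \<and> fst z = (1 - t) * fst (fst s) + t * fst (snd s) \<and>
        snd z = (1 - t) * snd (fst s) + t * snd (snd s))"
  unfolding seg_set_def closed_segment_def
  by (cases z; cases "fst s"; cases "snd s") auto

lemma fst_mem_seg_set: "fst s \<in> seg_set s"
  by (simp add: seg_set_def)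

lemma mem_interval_seg_iff:
  assumes "interval_seg_on c s"
  shows "z \<in> seg_set s \<longleftrightarrow> snd z = c \<and> fst z \<in> x_range s"
  using assms unfolding mem_seg_set_iff x_range_def closed_segment_def interval_seg_on_def on_line_def
  by (auto simp: algebra_simps)

lemma perm_seg_commute: "perm_seg b a = perm_seg a b"
  by (rule ext) (auto simp: perm_seg_def)

lemma interval_seg_commute: "interval_seg b a = interval_seg a b"
  by (rule ext) (auto simp: interval_seg_def)

lemma mem_perm_seg_iff:
  assumes "a \<noteq> b" "perm_seg a b p"
  shows "z \<in> seg_set p \<longleftrightarrow>
    (\<exists>t. 0 \<le> t \<and> t \<le> 1 \<and> fst z = (1 - t) * end_x a p + t * end_x b p \<and> snd z = (1 - t) * a + t * b)"
  using assms(2) unfolding perm_seg_def on_line_def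
proof
  assume "snd (fst p) = a \<and> snd (snd p) = b"
  then show ?thesis using assms(1) unfolding mem_seg_set_iff end_x_def by auto
next
  assume ends: "snd (fst p) = b \<and> snd (snd p) = a"
  have "seg_set p = seg_set (snd p, fst p)"
    unfolding seg_set_def by (simp add: closed_segment_commute)
  moreover have "end_x a p = fst (snd p)" "end_x b p = fst (fst p)"
    using ends assms(1) unfolding end_x_def by auto
  ultimately show ?thesis using ends by (simp add: mem_seg_set_iff)
qed

lemma interval_segs_meet_same_line:
  assumes "interval_seg_on c w" "interval_seg_on d w'" "seg_set w \<inter> seg_set w' \<noteq> {}"
  shows "c = d"
proof -
  obtain z where "z \<in> seg_set w" "z \<in> seg_set w'" using assms(3) by blast
  then show ?thesis using mem_interval_seg_iff[OF assms(1)] mem_interval_seg_iff[OF assms(2)] by auto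
qed

lemma interval_segs_meet_iff:
  assumes "interval_seg_on c w" "interval_seg_on c w'"
  shows "seg_set w \<inter> seg_set w' \<noteq> {} \<longleftrightarrow> x_range w \<inter> x_range w' \<noteq> {}"
proof
  assume "x_range w \<inter> x_range w' \<noteq> {}"
  then obtain x where "x \<in> x_range w" "x \<in> x_range w'" by blast
  then have "(x, c) \<in> seg_set w \<inter> seg_set w'"
    using mem_interval_seg_iff[OF assms(1)] mem_interval_seg_iff[OF assms(2)] by simp
  then show "seg_set w \<inter> seg_set w' \<noteq> {}" by blast
qed (use mem_interval_seg_iff[OF assms(1)] mem_interval_seg_iff[OF assms(2)] in blast)

lemma cross_x_at_line [simp]: "cross_x a b p a = end_x a p"
  by (simp add: cross_x_def)

lemma cross_point_mem_perm_seg: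
  assumes "a \<noteq> b" "perm_seg a b p" "y \<in> closed_segment a b"
  shows "(cross_x a b p y, y) \<in> seg_set p"
proof -
  obtain t where t: "0 \<le> t" "t \<le> 1" "y = (1 - t) * a + t * b"
    using assms(3) unfolding closed_segment_def by auto
  then have "(y - a) / (b - a) = t" using assms(1) by (simp add: field_simps)
  then have "cross_x a b p y = (1 - t) * end_x a p + t * end_x b p"
    unfolding cross_x_def by (simp add: algebra_simps)
  then show ?thesis using t mem_perm_seg_iff[OF assms(1,2)] by auto
qed

lemma end_point_mem_perm_seg:
  assumes "a \<noteq> b" "perm_seg a b p"
  shows "(end_x a p, a) \<in> seg_set p"
  using cross_point_mem_perm_seg[OF assms, of a] by simp

lemma perm_seg_meets_line_at_end:
  assumes "a \<noteq> b" "perm_seg a b p" "z \<in> seg_set p" "snd z = a"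
  shows "z = (end_x a p, a)"
proof -
  obtain t where t: "fst z = (1 - t) * end_x a p + t * end_x b p" "snd z = (1 - t) * a + t * b"
    using assms(3) mem_perm_seg_iff[OF assms(1,2)] by blast
  have "t * (b - a) = snd z - a" using t(2) by (simp add: algebra_simps)
  then have "t * (b - a) = 0" using assms(4) by simp
  then have "t = 0" using assms(1) by simp
  then show ?thesis using t assms(4) by (simp add: prod_eq_iff)
qed

lemma perm_seg_meets_interval_at_end:
  assumes "a \<noteq> b" "perm_seg a b p" "interval_seg_on a w" "seg_set p \<inter> seg_set w \<noteq> {}"
  shows "(end_x a p, a) \<in> seg_set w"
proof -
  obtain z where "z \<in> seg_set p" "z \<in> seg_set w" using assms(4) by blast
  then show ?thesis
    using perm_seg_meets_line_at_end[OF assms(1,2)] mem_interval_seg_iff[OF assms(3)] by metis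
qed

lemma perm_seg_meets_two_on_line:
  assumes "a \<noteq> b" "perm_seg a b p" "interval_seg_on a w" "interval_seg_on a w'"
    "seg_set p \<inter> seg_set w \<noteq> {}" "seg_set p \<inter> seg_set w' \<noteq> {}"
  shows "seg_set w \<inter> seg_set w' \<noteq> {}"
  using perm_seg_meets_interval_at_end[OF assms(1,2)] assms(3-6) by blast

lemma IP_seg_height_between_lines:
  assumes "interval_seg a b w \<or> perm_seg a b w" "z \<in> seg_set w"
  shows "snd z \<in> closed_segment a b"
proof -
  have ends: "snd (fst w) \<in> closed_segment a b" "snd (snd w) \<in> closed_segment a b"
    using assms(1) unfolding interval_seg_def interval_seg_on_def perm_seg_def on_line_def by auto
  have "snd z \<in> closed_segment (snd (fst w)) (snd (snd w))"
    using assms(2) unfolding mem_seg_set_iff closed_segment_def by auto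
  then show ?thesis using closed_segment_subset[OF ends] convex_closed_segment by blast
qed

section \<open>Sides of a permutation segment\<close>

text \<open>The horizontal offset from \<open>p\<close> is continuous and, by disjointness, never vanishes on the
  connected set \<open>seg_set w\<close>; hence it has constant sign there.\<close>
lemma left_of_constant_on_disjoint:
  assumes ab: "a \<noteq> b" and p: "perm_seg a b p" and w: "interval_seg a b w \<or> perm_seg a b w"
    and disj: "seg_set p \<inter> seg_set w = {}" and z: "z \<in> seg_set w" and z': "z' \<in> seg_set w"
  shows "left_of a b p z \<longleftrightarrow> left_of a b p z'"
proof (rule ccontr)
  define f where "f u = fst u - cross_x a b p (snd u)" for u
  have nonzero: "f u \<noteq> 0" if "u \<in> seg_set w" for u
  proof
    assume "f u = 0"
    then have "u = (cross_x a b p (snd u), snd u)" unfolding f_def by (simp add: prod_eq_iff)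
    then have "u \<in> seg_set p"
      using cross_point_mem_perm_seg[OF ab p IP_seg_height_between_lines[OF w that]] by simp
    then show False using disj that by blast
  qed
  have "connected (f ` seg_set w)"
    unfolding seg_set_def f_def cross_x_def
    by (intro connected_continuous_image connected_segment continuous_intros) (use ab in auto)
  then have ivl: "v \<in> f ` seg_set w" if "f u \<le> v" "v \<le> f u'" "u \<in> seg_set w" "u' \<in> seg_set w" for u u' v
    using that unfolding connected_iff_interval by blast
  assume "\<not> (left_of a b p z \<longleftrightarrow> left_of a b p z')"
  then have "f z < 0 \<and> 0 < f z' \<or> f z' < 0 \<and> 0 < f z"
    using nonzero[OF z] nonzero[OF z'] unfolding left_of_def f_def by linarith
  then have "0 \<in> f ` seg_set w"
    using ivl[OF _ _ z z', of 0] ivl[OF _ _ z' z, of 0] by linarith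
  then obtain u where "u \<in> seg_set w" "f u = 0" by (metis imageE)
  then show False using nonzero by blast
qed

lemma left_of_along_path:
  assumes ab: "a \<noteq> b" and p: "perm_seg a b p"
    and avoid: "\<And>t. t1 \<le> t \<Longrightarrow> t \<le> t2 \<Longrightarrow>
                  (interval_seg a b (T t) \<or> perm_seg a b (T t)) \<and> seg_set p \<inter> seg_set (T t) = {}"
    and path: "\<And>t. t1 \<le> t \<Longrightarrow> t < t2 \<Longrightarrow> seg_set (T t) \<inter> seg_set (T (Suc t)) \<noteq> {}"
    and "t1 \<le> t2" and z: "z \<in> seg_set (T t1)" and z': "z' \<in> seg_set (T t2)"
  shows "left_of a b p z \<longleftrightarrow> left_of a b p z'"
  using \<open>t1 \<le> t2\<close> avoid path z'
proof (induction t2 arbitrary: z' rule: dec_induct)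
  case base
  then show ?case using left_of_constant_on_disjoint[OF ab p _ _ z] by blast
next
  case (step t)
  obtain u where u: "u \<in> seg_set (T t)" "u \<in> seg_set (T (Suc t))" using step.prems(2)[of t] step.hyps by auto
  have "left_of a b p z \<longleftrightarrow> left_of a b p u" using step u by simp
  also have "\<dots> \<longleftrightarrow> left_of a b p z'"
    using left_of_constant_on_disjoint[OF ab p _ _ u(2) step.prems(3)] step.prems(1)[of "Suc t"] step.hyps
    by simp
  finally show ?case .
qed

lemma line_point_between_disjoint_perm_segs:
  assumes ab: "a \<noteq> b" and p: "perm_seg a b p" and q: "perm_seg a b q"
    and pq: "seg_set p \<inter> seg_set q = {}"
    and z: "snd z = a" "z \<notin> seg_set p" "z \<notin> seg_set q"
    and side_p: "left_of a b p z \<longleftrightarrow> left_of a b p (end_x a q, a)"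
    and side_q: "left_of a b q z \<longleftrightarrow> left_of a b q (end_x a p, a)"
  shows "fst z \<in> closed_segment (end_x a p) (end_x a q)"
proof -
  have "fst z \<noteq> end_x a p" "fst z \<noteq> end_x a q"
    using z end_point_mem_perm_seg[OF ab p] end_point_mem_perm_seg[OF ab q] by (metis prod.collapse)+
  moreover have "end_x a p \<noteq> end_x a q"
    using pq end_point_mem_perm_seg[OF ab p] end_point_mem_perm_seg[OF ab q] by force
  ultimately show ?thesis
    using side_p side_q z(1) unfolding left_of_def closed_segment_eq_real_ivl by auto
qed

lemma convex_chain_covers_segment:
  fixes I :: "nat \<Rightarrow> real set"
  assumes "\<And>u. u \<le> k \<Longrightarrow> convex (I u)" and "\<And>u. u < k \<Longrightarrow> I u \<inter> I (Suc u) \<noteq> {}"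
    and "x \<in> I 0" and "y \<in> I k" and "z \<in> closed_segment x y"
  shows "\<exists>u\<le>k. z \<in> I u"
  using assms(1,2,4,5)
proof (induction k arbitrary: y)
  case 0
  then show ?case using closed_segment_subset[OF \<open>x \<in> I 0\<close>] by blast
next
  case (Suc k)
  obtain w where w: "w \<in> I k" "w \<in> I (Suc k)" using Suc.prems(2) by blast
  have "z \<in> closed_segment x w \<or> z \<in> closed_segment w y"
    using Suc.prems(4) unfolding closed_segment_eq_real_ivl by (auto split: if_splits)
  then show ?case
  proof
    assume "z \<in> closed_segment x w"
    then show ?thesis using Suc.IH[of w] Suc.prems w(1) by force
  next
    assume "z \<in> closed_segment w y"
    then show ?thesis using closed_segment_subset[OF w(2) Suc.prems(3)] Suc.prems(1) by blast
  qed
qed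

section \<open>Representations of the cycle and interval arcs\<close>

lemma rep_cycle_kind:
  "IPSEG_rep_cycle a b n T \<Longrightarrow> t < n \<Longrightarrow> interval_seg a b (T t) \<or> perm_seg a b (T t)"
  unfolding IPSEG_rep_cycle_def by blast

lemma rep_cycle_meet_iff:
  "IPSEG_rep_cycle a b n T \<Longrightarrow> i < n \<Longrightarrow> j < n \<Longrightarrow> i \<noteq> j \<Longrightarrow>
   seg_set (T i) \<inter> seg_set (T j) \<noteq> {} \<longleftrightarrow> j = Suc i mod n \<or> i = Suc j mod n"
  unfolding IPSEG_rep_cycle_def by blast

lemma rep_cycle_meets_Suc:
  "IPSEG_rep_cycle a b n T \<Longrightarrow> Suc t < n \<Longrightarrow> seg_set (T t) \<inter> seg_set (T (Suc t)) \<noteq> {}"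
  by (simp add: rep_cycle_meet_iff)

lemma rep_cycle_meets_last_first:
  "IPSEG_rep_cycle a b n T \<Longrightarrow> 2 \<le> n \<Longrightarrow> seg_set (T (n - 1)) \<inter> seg_set (T 0) \<noteq> {}"
  by (simp add: rep_cycle_meet_iff)

lemma rep_cycle_disjoint:
  assumes "IPSEG_rep_cycle a b n T" "Suc i < j" "j < n" "\<not> (i = 0 \<and> Suc j = n)"
  shows "seg_set (T i) \<inter> seg_set (T j) = {}"
proof -
  have "j \<noteq> Suc i mod n" "i \<noteq> Suc j mod n"
    using assms(2-4) by (auto simp: mod_Suc)
  then show ?thesis using assms(1-3) rep_cycle_meet_iff[OF assms(1), of i j] by simp
qed

lemma mod_add_left_cancel_iff: "(c + x) mod n = (c + y) mod n \<longleftrightarrow> x mod n = y mod (n::nat)"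
  by (simp add: nat_mod_eq_iff add.assoc)

lemma rep_cycle_rotate:
  assumes R: "IPSEG_rep_cycle a b n s" and c: "c < n"
  shows "IPSEG_rep_cycle a b n (\<lambda>t. s ((c + t) mod n))"
  unfolding IPSEG_rep_cycle_def
proof (intro conjI allI impI)
  fix i assume "i < n"
  then show "interval_seg a b (s ((c + i) mod n)) \<or> perm_seg a b (s ((c + i) mod n))"
    using rep_cycle_kind[OF R] c by simp
next
  fix i j assume ij: "i < n" "j < n" "i \<noteq> j"
  have shift: "(c + j) mod n = Suc ((c + i) mod n) mod n \<longleftrightarrow> j = Suc i mod n" if "i < n" "j < n" for i j
    using mod_add_left_cancel_iff[of c j n "Suc i"] that by (simp add: mod_Suc_eq)
  have "(c + i) mod n \<noteq> (c + j) mod n" using mod_add_left_cancel_iff[of c i n j] ij by simp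
  then show "(seg_set (s ((c + i) mod n)) \<inter> seg_set (s ((c + j) mod n)) \<noteq> {}) =
       (j = Suc i mod n \<or> i = Suc j mod n)"
    using R c shift[OF ij(1,2)] shift[OF ij(2,1)] unfolding IPSEG_rep_cycle_def by simp
qed

lemma rep_cycle_commute: "IPSEG_rep_cycle b a n s = IPSEG_rep_cycle a b n s"
  by (simp only: IPSEG_rep_cycle_def interval_seg_commute perm_seg_commute)

lemma interval_arc_commute: "interval_arc b a n s A = interval_arc a b n s A"
  by (simp only: interval_arc_def interval_run_def interval_seg_commute)

lemma perm_segs_enclose_interval_seg_absurd:
  assumes ab: "a \<noteq> b" and R: "IPSEG_rep_cycle a b n T"
    and arc: "\<forall>t\<le>k. interval_seg_on a (T t)"
    and p: "perm_seg a b (T (Suc k))" and q: "perm_seg a b (T (n - 1))"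
    and j: "Suc (Suc (Suc k)) \<le> j" "j + 3 \<le> n" "interval_seg_on a (T j)"
  shows False
proof -
  let ?p = "T (Suc k)" and ?q = "T (n - 1)"
  have kind: "interval_seg a b (T t) \<or> perm_seg a b (T t)" if "t < n" for t
    using rep_cycle_kind[OF R that] .
  have path: "seg_set (T t) \<inter> seg_set (T (Suc t)) \<noteq> {}" if "Suc t < n" for t
    using rep_cycle_meets_Suc[OF R that] .
  have pq: "seg_set ?p \<inter> seg_set ?q = {}"
    using rep_cycle_disjoint[OF R, of "Suc k" "n - 1"] j by simp
  have p_avoids: "seg_set ?p \<inter> seg_set (T t) = {}" if "j \<le> t" "t < n" for t
    using rep_cycle_disjoint[OF R, of "Suc k" t] that j by simp
  have q_avoids: "seg_set ?q \<inter> seg_set (T t) = {}" if "Suc k \<le> t" "t \<le> j" for t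
    using rep_cycle_disjoint[OF R, of t "n - 1"] that j by (simp add: Int_commute)
  obtain z where z: "z \<in> seg_set (T j)" using fst_mem_seg_set by blast
  have za: "snd z = a" using z mem_interval_seg_iff[OF j(3)] by blast
  have "left_of a b ?p z \<longleftrightarrow> left_of a b ?p (end_x a ?q, a)"
    by (rule left_of_along_path[OF ab p _ _ _ z end_point_mem_perm_seg[OF ab q]])
      (use kind p_avoids path j in auto)
  moreover have "left_of a b ?q (end_x a ?p, a) \<longleftrightarrow> left_of a b ?q z"
    by (rule left_of_along_path[OF ab q _ _ _ end_point_mem_perm_seg[OF ab p] z])
      (use kind q_avoids path j in auto)
  moreover have "j < n" "Suc k \<le> j" using j by simp_all
  then have "z \<notin> seg_set ?p" "z \<notin> seg_set ?q"
    using z p_avoids[OF order_refl] q_avoids[OF _ order_refl] by blast+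
  ultimately have between: "fst z \<in> closed_segment (end_x a ?q) (end_x a ?p)"
    using line_point_between_disjoint_perm_segs[OF ab p q pq za] by (simp add: closed_segment_commute)
  have first: "interval_seg_on a (T 0)" and last: "interval_seg_on a (T k)" using arc by simp_all
  have "end_x a ?q \<in> x_range (T 0)"
    using perm_seg_meets_interval_at_end[OF ab q first rep_cycle_meets_last_first[OF R]] j
    by (simp add: mem_interval_seg_iff[OF first])
  moreover have "end_x a ?p \<in> x_range (T k)"
    using perm_seg_meets_interval_at_end[OF ab p last] path[of k] j
    by (simp add: mem_interval_seg_iff[OF last] Int_commute)
  moreover have "x_range (T u) \<inter> x_range (T (Suc u)) \<noteq> {}" if "u < k" for u
    using interval_segs_meet_iff[of a "T u" "T (Suc u)"] path[of u] arc that j by simp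
  ultimately obtain u where u: "u \<le> k" "fst z \<in> x_range (T u)"
    using convex_chain_covers_segment[where I = "\<lambda>u. x_range (T u)", OF _ _ _ _ between]
    by (auto simp: x_range_def)
  then have "z \<in> seg_set (T u)" using mem_interval_seg_iff[of a "T u" z] arc za by simp
  then show False using rep_cycle_disjoint[OF R, of u j] u j z by auto
qed

text \<open>Here \<open>T\<close> is the cycle rotated so that an interval arc on line \<open>a\<close> is \<open>T 0, \<dots>, T k\<close>.\<close>
lemma interval_seg_on_line_beyond_arc_absurd:
  assumes ab: "a \<noteq> b" and n4: "4 \<le> n" and R: "IPSEG_rep_cycle a b n T"
    and arc: "\<forall>t\<le>k. interval_seg_on a (T t)"
    and p: "perm_seg a b (T (Suc k))" and q: "perm_seg a b (T (n - 1))"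
    and j: "Suc (Suc k) \<le> j" "j \<le> n - 2" "interval_seg_on a (T j)"
  shows False
proof -
  consider "j = Suc (Suc k)" | "j = n - 2" | "Suc (Suc (Suc k)) \<le> j" "j + 3 \<le> n"
    using j n4 by linarith
  then show False
  proof cases
    case 1
    have "seg_set (T k) \<inter> seg_set (T j) \<noteq> {}"
      using perm_seg_meets_two_on_line[OF ab p, of "T k" "T j"] arc j 1
        rep_cycle_meets_Suc[OF R, of k] rep_cycle_meets_Suc[OF R, of "Suc k"]
      by (auto simp: Int_commute)
    moreover have "seg_set (T k) \<inter> seg_set (T j) = {}"
      by (rule rep_cycle_disjoint[OF R]) (use 1 j in arith)+
    ultimately show False by blast
  next
    case 2
    have "Suc (n - 2) = n - 1" using n4 by simp
    then have "seg_set (T 0) \<inter> seg_set (T j) \<noteq> {}"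
      using perm_seg_meets_two_on_line[OF ab q, of "T 0" "T j"] arc j 2 n4
        rep_cycle_meets_last_first[OF R] rep_cycle_meets_Suc[OF R, of "n - 2"]
      by (auto simp: Int_commute)
    moreover have "seg_set (T 0) \<inter> seg_set (T j) = {}"
      by (rule rep_cycle_disjoint[OF R]) (use 2 n4 in arith)+
    ultimately show False by blast
  next
    case 3
    then show False using perm_segs_enclose_interval_seg_absurd[OF ab R arc p q] j by blast
  qed
qed

lemma mem_cyc_block_iff: "x \<in> cyc_block n i k \<longleftrightarrow> (\<exists>t\<le>k. x = (i + t) mod n)"
  unfolding cyc_block_def by auto

lemma cyc_block_lessThan: "0 < n \<Longrightarrow> cyc_block n i k \<subseteq> {..<n}"
  unfolding cyc_block_def by auto

lemma add_mod_mem_cyc_block_iff: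
  assumes "t < n" "k < n"
  shows "(i + t) mod n \<in> cyc_block n i k \<longleftrightarrow> t \<le> k"
proof
  assume "(i + t) mod n \<in> cyc_block n i k"
  then obtain t' where "t' \<le> k" "(i + t) mod n = (i + t') mod n" unfolding mem_cyc_block_iff by blast
  then have "t = t'" using mod_add_left_cancel_iff[of i t n t'] assms by simp
  then show "t \<le> k" using \<open>t' \<le> k\<close> by simp
qed (auto simp: mem_cyc_block_iff)

lemma cyc_block_Suc: "cyc_block n i (Suc k) = insert ((i + Suc k) mod n) (cyc_block n i k)"
  unfolding set_eq_iff mem_cyc_block_iff insert_iff le_Suc_eq by blast

lemma cyc_block_Suc_from_pred:
  assumes "0 < n"
  shows "cyc_block n ((i + (n - 1)) mod n) (Suc k) = insert ((i + (n - 1)) mod n) (cyc_block n i k)"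
proof -
  define i' where "i' = (i + (n - 1)) mod n"
  have shift: "(i' + Suc t) mod n = (i + t) mod n" for t
  proof -
    have "(i' + Suc t) mod n = (i + (n - 1) + Suc t) mod n"
      unfolding i'_def by (rule mod_add_left_eq)
    also have "i + (n - 1) + Suc t = (i + t) + n" using assms by simp
    finally show ?thesis by simp
  qed
  have "x \<in> cyc_block n i' (Suc k) \<longleftrightarrow> x \<in> insert i' (cyc_block n i k)" for x
  proof
    assume "x \<in> cyc_block n i' (Suc k)"
    then obtain t where t: "t \<le> Suc k" "x = (i' + t) mod n" by (auto simp: mem_cyc_block_iff)
    show "x \<in> insert i' (cyc_block n i k)"
    proof (cases t)
      case 0
      then show ?thesis using t unfolding i'_def by simp
    next
      case (Suc t')
      then have "x = (i + t') mod n" using t shift[of t'] by simp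
      then show ?thesis using \<open>t \<le> Suc k\<close> Suc unfolding insert_iff mem_cyc_block_iff by auto
    qed
  next
    assume "x \<in> insert i' (cyc_block n i k)"
    then show "x \<in> cyc_block n i' (Suc k)"
      unfolding insert_iff mem_cyc_block_iff using shift
      by (metis Suc_le_mono add_0_right i'_def mod_mod_trivial zero_le)
  qed
  then show ?thesis unfolding i'_def[symmetric] by blast
qed

lemma exists_add_mod_eq:
  assumes "i < n" "j < (n::nat)"
  shows "\<exists>t<n. j = (i + t) mod n"
proof -
  have "(i + (j + n - i) mod n) mod n = (i + (j + n - i)) mod n" by (simp add: mod_add_right_eq)
  also have "\<dots> = j" using assms by simp
  finally show ?thesis using assms by (intro exI[of _ "(j + n - i) mod n"]) auto
qed

lemma interval_arc_absorbs:
  assumes "interval_arc a b n s A" "insert j A = cyc_block n i k" "i < n" "k < n"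
    "interval_seg a b (s j)"
  shows "j \<in> A"
proof -
  have "interval_run a b n s (insert j A)"
    using assms unfolding interval_arc_def interval_run_def by blast
  then show ?thesis using assms(1) unfolding interval_arc_def by blast
qed

lemma interval_arc_neighbours_not_interval:
  assumes arc: "interval_arc a b n s (cyc_block n i k)" and i: "i < n" and k: "Suc k < n"
  shows "\<not> interval_seg a b (s ((i + Suc k) mod n))"
    and "\<not> interval_seg a b (s ((i + (n - 1)) mod n))"
proof -
  show "\<not> interval_seg a b (s ((i + Suc k) mod n))"
  proof
    assume "interval_seg a b (s ((i + Suc k) mod n))"
    then have "(i + Suc k) mod n \<in> cyc_block n i k"
      by (rule interval_arc_absorbs[OF arc cyc_block_Suc[symmetric] i k])
    then show False using add_mod_mem_cyc_block_iff[of "Suc k" n k i] k by simp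
  qed
  have n: "0 < n" and i': "(i + (n - 1)) mod n < n" using k by simp_all
  show "\<not> interval_seg a b (s ((i + (n - 1)) mod n))"
  proof
    assume "interval_seg a b (s ((i + (n - 1)) mod n))"
    then have "(i + (n - 1)) mod n \<in> cyc_block n i k"
      by (rule interval_arc_absorbs[OF arc cyc_block_Suc_from_pred[OF n, symmetric] i' k])
    then show False using add_mod_mem_cyc_block_iff[of "n - 1" n k i] k by simp
  qed
qed

lemma interval_seg_on_line_mem_interval_arc:
  assumes ab: "a \<noteq> b" and n4: "4 \<le> n" and R: "IPSEG_rep_cycle a b n s"
    and arc: "interval_arc a b n s A" and on_a: "\<forall>x\<in>A. interval_seg_on a (s x)"
    and j: "j < n" "interval_seg_on a (s j)"
  shows "j \<in> A"
proof (rule ccontr)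
  assume "j \<notin> A"
  obtain i k where ik: "i < n" "k < n" and A: "A = cyc_block n i k"
    using arc unfolding interval_arc_def interval_run_def by blast
  note arc = arc[unfolded A] and on_a = on_a[unfolded A]
  have "j \<notin> cyc_block n i k" using \<open>j \<notin> A\<close> A by simp
  define T where "T t = s ((i + t) mod n)" for t
  have RT: "IPSEG_rep_cycle a b n T" unfolding T_def using rep_cycle_rotate[OF R ik(1)] .
  obtain t where t: "t < n" "j = (i + t) mod n" using exists_add_mod_eq[OF ik(1) j(1)] by blast
  have "k < t" using \<open>j \<notin> cyc_block n i k\<close> add_mod_mem_cyc_block_iff[OF t(1) ik(2)] t(2) by simp
  then have kn: "Suc k < n" using t(1) by simp
  have "\<not> interval_seg a b (T (Suc k))" "\<not> interval_seg a b (T (n - 1))"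
    using interval_arc_neighbours_not_interval[OF arc ik(1) kn] unfolding T_def by simp_all
  moreover have "interval_seg_on a (T t)" using j t unfolding T_def by simp
  ultimately have "t \<noteq> Suc k" "t \<noteq> n - 1" unfolding interval_seg_def by auto
  then have "Suc (Suc k) \<le> t" "t \<le> n - 2" using \<open>k < t\<close> t(1) by arith+
  moreover have "perm_seg a b (T (Suc k))"
    using rep_cycle_kind[OF RT kn] \<open>\<not> interval_seg a b (T (Suc k))\<close> by blast
  moreover have "perm_seg a b (T (n - 1))"
    using rep_cycle_kind[OF RT, of "n - 1"] n4 \<open>\<not> interval_seg a b (T (n - 1))\<close> by simp
  moreover have "\<forall>t'\<le>k. interval_seg_on a (T t')"
    unfolding T_def using on_a mem_cyc_block_iff by blast
  ultimately show False
    using interval_seg_on_line_beyond_arc_absurd[OF ab n4 RT] \<open>interval_seg_on a (T t)\<close> by blast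
qed

lemma interval_arc_on_line_unique:
  assumes ab: "a \<noteq> b" and n4: "4 \<le> n" and R: "IPSEG_rep_cycle a b n s"
    and A: "interval_arc a b n s A" "\<forall>x\<in>A. interval_seg_on a (s x)"
    and B: "interval_arc a b n s B" "\<forall>x\<in>B. interval_seg_on a (s x)"
  shows "A = B"
proof -
  obtain i k where "B = cyc_block n i k"
    using B(1) unfolding interval_arc_def interval_run_def by blast
  then have "B \<subseteq> {..<n}" using cyc_block_lessThan n4 by simp
  then have "B \<subseteq> A" using interval_seg_on_line_mem_interval_arc[OF ab n4 R A] B(2) by blast
  moreover have "interval_run a b n s A" using A(1) unfolding interval_arc_def by blast
  ultimately show ?thesis using B(1) unfolding interval_arc_def by blast
qed

lemma interval_run_on_one_line:
  assumes R: "IPSEG_rep_cycle a b n s" and run: "interval_run a b n s A"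
  shows "(\<forall>x\<in>A. interval_seg_on a (s x)) \<or> (\<forall>x\<in>A. interval_seg_on b (s x))"
proof -
  obtain i k where ik: "i < n" "k < n" and A: "A = cyc_block n i k"
    and int: "\<forall>x\<in>A. interval_seg a b (s x)"
    using run unfolding interval_run_def by blast
  define T where "T t = s ((i + t) mod n)" for t
  have RT: "IPSEG_rep_cycle a b n T" unfolding T_def using rep_cycle_rotate[OF R ik(1)] .
  have int_T: "interval_seg a b (T t)" if "t \<le> k" for t
    using int that mem_cyc_block_iff unfolding A T_def by blast
  obtain c where c: "c = a \<or> c = b" "interval_seg_on c (T 0)"
    using int_T[of 0] unfolding interval_seg_def by blast
  have "interval_seg_on c (T t)" if "t \<le> k" for t
    using that
  proof (induction t)
    case (Suc t)
    obtain d where d: "interval_seg_on d (T (Suc t))"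
      using int_T[OF Suc.prems] unfolding interval_seg_def by blast
    have "seg_set (T t) \<inter> seg_set (T (Suc t)) \<noteq> {}"
      using rep_cycle_meets_Suc[OF RT] Suc.prems ik(2) by simp
    then have "c = d" using interval_segs_meet_same_line[OF _ d] Suc by simp
    then show ?case using d by simp
  qed (use c in simp)
  then have "\<forall>x\<in>A. interval_seg_on c (s x)"
    unfolding A T_def by (auto simp: mem_cyc_block_iff)
  then show ?thesis using c(1) by blast
qed

lemma interval_run_nonempty: "interval_run a b n s A \<Longrightarrow> A \<noteq> {}"
  unfolding interval_run_def cyc_block_def by auto

lemma interval_arc_exists:
  assumes "0 < n" "j < n" "interval_seg a b (s j)"
  shows "\<exists>A. interval_arc a b n s A"
proof -
  let ?R = "{X. interval_run a b n s X \<and> j \<in> X}"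
  have "?R \<subseteq> Pow {..<n}"
    using cyc_block_lessThan[OF assms(1)] unfolding interval_run_def by blast
  then have "finite ?R" by (rule finite_subset) simp
  have "cyc_block n j 0 = {j}" unfolding cyc_block_def using assms(2) by auto
  then have "{j} \<in> ?R" unfolding interval_run_def using assms by blast
  then obtain M where M: "M \<in> ?R" "\<forall>X\<in>?R. M \<subseteq> X \<longrightarrow> M = X"
    using finite_has_maximal[OF \<open>finite ?R\<close>] by blast
  then have "interval_arc a b n s M" unfolding interval_arc_def by blast
  then show ?thesis by blast
qed

definition arcs_on :: "real \<Rightarrow> real \<Rightarrow> nat \<Rightarrow> (nat \<Rightarrow> seg) \<Rightarrow> real \<Rightarrow> nat set set" where
  "arcs_on a b n s c = {A. interval_arc a b n s A \<and> (\<forall>j\<in>A. interval_seg_on c (s j))}"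

lemma interval_arcs_eq_Un_arcs_on:
  assumes "IPSEG_rep_cycle a b n s"
  shows "{A. interval_arc a b n s A} = arcs_on a b n s a \<union> arcs_on a b n s b"
  using interval_run_on_one_line[OF assms] unfolding arcs_on_def interval_arc_def by blast

lemma arcs_on_subsingleton:
  assumes "a \<noteq> b" "4 \<le> n" "IPSEG_rep_cycle a b n s" "c = a \<or> c = b"
    and "A \<in> arcs_on a b n s c" "B \<in> arcs_on a b n s c"
  shows "A = B"
  using assms(4)
proof
  assume "c = a"
  then show ?thesis
    using interval_arc_on_line_unique[OF assms(1-3)] assms(5,6) unfolding arcs_on_def by blast
next
  assume "c = b"
  moreover have "b \<noteq> a" "IPSEG_rep_cycle b a n s" using assms(1,3) by (auto simp: rep_cycle_commute)
  ultimately show ?thesis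
    using interval_arc_on_line_unique[of b a n s] assms(2,5,6) interval_arc_commute
    unfolding arcs_on_def by blast
qed

lemma arcs_on_disjoint:
  assumes "a \<noteq> b"
  shows "arcs_on a b n s a \<inter> arcs_on a b n s b = {}"
proof -
  have False if A: "A \<in> arcs_on a b n s a" "A \<in> arcs_on a b n s b" for A
  proof -
    obtain x where "x \<in> A"
      using A(1) interval_run_nonempty unfolding arcs_on_def interval_arc_def by blast
    then have "interval_seg_on a (s x)" "interval_seg_on b (s x)" using A unfolding arcs_on_def by auto
    then show False using assms unfolding interval_seg_on_def on_line_def by simp
  qed
  then show ?thesis by blast
qed

theorem mainTheorem6:
  fixes a b :: real and n :: nat and s :: "nat \<Rightarrow> seg"
  assumes "a \<noteq> b"
    and "n \<ge> 4"
    and "IPSEG_rep_cycle a b n s"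
    and "\<exists>i<n. interval_seg a b (s i)"
  shows "card {A. interval_arc a b n s A} = 1 \<or>
         (card {A. interval_arc a b n s A} = 2 \<and>
          (\<exists>A B. interval_arc a b n s A \<and> interval_arc a b n s B \<and>
                 (\<forall>j\<in>A. interval_seg_on a (s j)) \<and> (\<forall>j\<in>B. interval_seg_on b (s j))))"
proof -
  let ?S = "arcs_on a b n s"
  have arcs: "{A. interval_arc a b n s A} = ?S a \<union> ?S b"
    using interval_arcs_eq_Un_arcs_on[OF assms(3)] .
  have single: "is_singleton (?S c)" if "c = a \<or> c = b" "?S c \<noteq> {}" for c
    using arcs_on_subsingleton[OF assms(1-3) that(1)] that(2) by (intro is_singletonI') auto
  obtain i where "i < n" "interval_seg a b (s i)" using assms(4) by blast
  moreover have "0 < n" using assms(2) by simp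
  ultimately obtain A0 where "interval_arc a b n s A0" using interval_arc_exists by blast
  then have "?S a \<union> ?S b \<noteq> {}" using arcs by blast
  then consider "?S a = {}" "?S b \<noteq> {}" | "?S b = {}" "?S a \<noteq> {}" | "?S a \<noteq> {}" "?S b \<noteq> {}"
    by blast
  then show ?thesis
  proof cases
    case 1
    then have "card {A. interval_arc a b n s A} = 1" using arcs single[of b] by (simp add: is_singleton_altdef)
    then show ?thesis by simp
  next
    case 2
    then have "card {A. interval_arc a b n s A} = 1" using arcs single[of a] by (simp add: is_singleton_altdef)
    then show ?thesis by simp
  next
    case 3
    then obtain A B where AB: "?S a = {A}" "?S b = {B}"
      using single[of a] single[of b] unfolding is_singleton_def by blast
    moreover have "A \<noteq> B" using arcs_on_disjoint[OF assms(1), of n s] AB by blast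
    ultimately have "card {A. interval_arc a b n s A} = 2" using arcs by simp
    moreover have "A \<in> ?S a" "B \<in> ?S b" using AB by simp_all
    ultimately show ?thesis unfolding arcs_on_def by blast
  qed
qed

end
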